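(* Let $T$ be an $n$-simplex, $\ell\in\{1,\dots,n-1\}$, and let non-negative integers $r_{\ell-1},r_\ell$ satisfy $r_{\ell-1}\ge 2r_\ell$. Then the sets $$D(f,r_\ell)\setminus\Big[\bigcup_{e\in\Delta_{\ell-1}(f)}D(e,r_{\ell-1})\Big],\qquad f\in\Delta_\ell(T),$$ are pairwise disjoint.
   Context: $\mathbb N$ includes $0$; $\mathbb T^n_k=\{\alpha\in\mathbb N^{n+1}:\sum_i\alpha_i=k\}$ for a fixed integer $k\ge0$. $\Delta_\ell(T)$ is the set of $\ell$-dimensional faces of $T$; a face $f$ is identified with its vertex index set $f\subseteq\{0,\dots,n\}$, $f^*=\{0,\dots,n\}\setminus f$, and $\Delta_{\ell-1}(f)$ is the set of $(\ell-1)$-dimensional faces of $f$. $D(f,r)=\{\alpha\in\mathbb T^n_k:\sum_{i\in f^*}\alpha_i\le r\}$. *)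

theory Defs
  imports Main
begin

text \<open>Multi-indices alpha in N^(n+1) are represented as functions nat => nat
  vanishing outside {0..n}.\<close>
definition lattice_T :: "nat \<Rightarrow> nat \<Rightarrow> (nat \<Rightarrow> nat) set" where
  "lattice_T n k = {\<alpha>. (\<forall>i>n. \<alpha> i = 0) \<and> (\<Sum>i\<in>{0..n}. \<alpha> i) = k}"

text \<open>l-dimensional faces of the n-simplex, identified with vertex index sets.\<close>
definition faces :: "nat \<Rightarrow> nat \<Rightarrow> nat set set" where
  "faces n l = {f. f \<subseteq> {0..n} \<and> card f = l + 1}"

text \<open>(l-1)-dimensional faces of a face f (f has l+1 vertices).\<close>
definition subfaces :: "nat set \<Rightarrow> nat \<Rightarrow> nat set set" where
  "subfaces f l = {e. e \<subseteq> f \<and> card e = l}"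

definition compl_face :: "nat \<Rightarrow> nat set \<Rightarrow> nat set" where
  "compl_face n f = {0..n} - f"

definition D :: "nat \<Rightarrow> nat \<Rightarrow> nat set \<Rightarrow> nat \<Rightarrow> (nat \<Rightarrow> nat) set" where
  "D n k f r = {\<alpha> \<in> lattice_T n k. (\<Sum>i\<in>compl_face n f. \<alpha> i) \<le> r}"

end

theory Submission
  imports Defs
begin

text \<open>If \<open>\<alpha>\<close> lies in \<open>D(f, r)\<close> and in \<open>D(g, r)\<close> for distinct faces \<open>f, g\<close>, choose a facet
  \<open>e\<close> of \<open>f\<close> containing \<open>f \<inter> g\<close>. Every vertex outside \<open>e\<close> lies outside \<open>f\<close> or outside
  \<open>g\<close>, so the mass of \<open>\<alpha>\<close> off \<open>e\<close> is at most \<open>2r\<close>, i.e. \<open>\<alpha> \<in> D(e, 2r)\<close>. Hence \<open>\<alpha>\<close>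
  cannot survive the removal of the neighbourhoods of the facets of \<open>f\<close>.\<close>

lemma exists_facet_containing_Int:
  assumes "finite f" "card f = card g" "f \<noteq> g" "card f = Suc m"
  obtains e where "f \<inter> g \<subseteq> e" "e \<subseteq> f" "card e = m"
proof -
  have "finite g"
    using assms(2,4) card.infinite by fastforce
  then have "\<not> f \<subseteq> g"
    using assms(2,3) card_subset_eq by blast
  then have "card (f \<inter> g) < card f"
    using assms(1) by (intro psubset_card_mono) auto
  then have "card (f \<inter> g) \<le> m"
    using assms(4) by simp
  then obtain e where "f \<inter> g \<subseteq> e" "e \<subseteq> f" "card e = m"
    using exists_subset_between[of "f \<inter> g" m f] assms(1,4) by auto
  then show thesis by (rule that)
qed

lemma sum_le_sum_Un_nat:
  fixes \<alpha> :: "'a \<Rightarrow> nat"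
  assumes "finite B" "finite C" "A \<subseteq> B \<union> C"
  shows "sum \<alpha> A \<le> sum \<alpha> B + sum \<alpha> C"
proof -
  have "sum \<alpha> A \<le> sum \<alpha> (B \<union> C)"
    using assms by (intro sum_mono2) auto
  also have "\<dots> \<le> sum \<alpha> B + sum \<alpha> C"
    using assms(1,2) by (simp add: sum_Un_nat)
  finally show ?thesis .
qed

lemma D_mono:
  "r \<le> s \<Longrightarrow> D n k f r \<subseteq> D n k f s"
  by (auto simp: D_def)

lemma D_Int_subset:
  assumes "f \<inter> g \<subseteq> e"
  shows "D n k f r \<inter> D n k g s \<subseteq> D n k e (r + s)"
proof
  fix \<alpha> assume \<alpha>: "\<alpha> \<in> D n k f r \<inter> D n k g s"
  have "compl_face n e \<subseteq> compl_face n f \<union> compl_face n g"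
    using assms by (auto simp: compl_face_def)
  then have "(\<Sum>i\<in>compl_face n e. \<alpha> i) \<le> (\<Sum>i\<in>compl_face n f. \<alpha> i) + (\<Sum>i\<in>compl_face n g. \<alpha> i)"
    by (intro sum_le_sum_Un_nat) (simp_all add: compl_face_def)
  also have "\<dots> \<le> r + s"
    using \<alpha> by (auto simp: D_def)
  finally show "\<alpha> \<in> D n k e (r + s)"
    using \<alpha> by (auto simp: D_def)
qed

lemma D_Int_subset_UN_subfaces:
  assumes "f \<in> faces n l" "g \<in> faces n l" "f \<noteq> g"
  shows "D n k f r \<inter> D n k g r \<subseteq> (\<Union>e\<in>subfaces f l. D n k e (2 * r))"
proof -
  have "f \<subseteq> {0..n}" "card f = Suc l" "card g = Suc l"
    using assms(1,2) by (simp_all add: faces_def)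
  moreover have "finite f"
    using \<open>f \<subseteq> {0..n}\<close> finite_subset by blast
  ultimately obtain e where e: "f \<inter> g \<subseteq> e" "e \<subseteq> f" "card e = l"
    using exists_facet_containing_Int[of f g l] assms(3) by auto
  then have "e \<in> subfaces f l"
    by (simp add: subfaces_def)
  moreover have "D n k f r \<inter> D n k g r \<subseteq> D n k e (2 * r)"
    using D_Int_subset[OF e(1)] by (simp add: mult_2)
  ultimately show ?thesis
    by blast
qed

theorem mainTheorem5:
  fixes n k l r_lm1 r_l :: nat
  assumes "1 \<le> l" and "l \<le> n - 1" and "r_lm1 \<ge> 2 * r_l"
  shows "\<forall>f\<in>faces n l. \<forall>g\<in>faces n l. f \<noteq> g \<longrightarrow>
           disjnt (D n k f r_l - (\<Union>e\<in>subfaces f l. D n k e r_lm1))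
                  (D n k g r_l - (\<Union>e\<in>subfaces g l. D n k e r_lm1))"
proof (intro ballI impI)
  fix f g assume "f \<in> faces n l" "g \<in> faces n l" "f \<noteq> g"
  then have "D n k f r_l \<inter> D n k g r_l \<subseteq> (\<Union>e\<in>subfaces f l. D n k e (2 * r_l))"
    by (rule D_Int_subset_UN_subfaces)
  also have "\<dots> \<subseteq> (\<Union>e\<in>subfaces f l. D n k e r_lm1)"
    using assms(3) by (intro UN_mono order_refl D_mono)
  finally show "disjnt (D n k f r_l - (\<Union>e\<in>subfaces f l. D n k e r_lm1))
                    (D n k g r_l - (\<Union>e\<in>subfaces g l. D n k e r_lm1))"
    unfolding disjnt_def by blast
qed

end
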